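(* Let $v\in\mathcal{Z}^1$. Then the limit $\mathcal{P}(v)=\lim_{R\to+\infty}\frac12\int_{-R}^R\langle iv,v'\rangle$ exists. Moreover, if $v\in\tilde{\mathcal{Z}}^1$, writing $v=\varrho e^{i\varphi}$ on $\mathbb{R}$ with $\varrho=|v|>0$ and $\varphi$ a continuous real lift of the phase, the limits $\varphi(\pm\infty)$ exist, $(\varrho^2-1)\varphi'\in L^1(\mathbb{R})$, and $$\mathcal{P}(v)=\frac12\int_\mathbb{R}(\varrho^2-1)\varphi'+\frac12\big(\varphi(+\infty)-\varphi(-\infty)\big).$$
   Context: $\mathcal{X}^1=\{w\in L^\infty(\mathbb{R};\mathbb{C}):\ w'\in L^2,\ 1-|w|^2\in L^2\}$; $\mathcal{Z}^1=\{v\in\mathcal{X}^1:\ \lim_{x\to\pm\infty}v(x)\text{ exist}\}$; $\tilde{\mathcal{Z}}^1=\{v\in\mathcal{Z}^1:\ |v(x)|>0\ \forall x\in\mathbb{R}\}$. $\langle a,b\rangle=\mathrm{Re}(a\bar b)$. *)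

theory Defs
  imports "HOL-Analysis.Analysis"
begin

text \<open>g is a (weak) derivative of f in the sense of W^{1,1}_loc, with f the continuous
  (locally absolutely continuous) representative: f y - f x = integral of g over [x,y].\<close>
definition weak_deriv :: "(real \<Rightarrow> 'a::{banach,second_countable_topology}) \<Rightarrow> (real \<Rightarrow> 'a) \<Rightarrow> bool" where
  "weak_deriv f g \<longleftrightarrow>
     (\<forall>x y. x \<le> y \<longrightarrow> set_integrable lborel {x..y} g \<and> f y - f x = (LINT t:{x..y}|lborel. g t))"

text \<open>X^1: v in L^infty, v' in L^2, 1 - |v|^2 in L^2 (dv plays the role of v').\<close>
definition X1 :: "(real \<Rightarrow> complex) \<Rightarrow> (real \<Rightarrow> complex) \<Rightarrow> bool" where
  "X1 v dv \<longleftrightarrow> bounded (range v) \<and> weak_deriv v dv \<and> dv \<in> borel_measurable lborel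
     \<and> integrable lborel (\<lambda>x. (cmod (dv x))\<^sup>2)
     \<and> integrable lborel (\<lambda>x. (1 - (cmod (v x))\<^sup>2)\<^sup>2)"

definition Z1 :: "(real \<Rightarrow> complex) \<Rightarrow> (real \<Rightarrow> complex) \<Rightarrow> bool" where
  "Z1 v dv \<longleftrightarrow> X1 v dv \<and> (\<exists>l. (v \<longlongrightarrow> l) at_top) \<and> (\<exists>l. (v \<longlongrightarrow> l) at_bot)"

definition Z1_tilde :: "(real \<Rightarrow> complex) \<Rightarrow> (real \<Rightarrow> complex) \<Rightarrow> bool" where
  "Z1_tilde v dv \<longleftrightarrow> Z1 v dv \<and> (\<forall>x. cmod (v x) > 0)"

definition cinner :: "complex \<Rightarrow> complex \<Rightarrow> real" where
  "cinner a b = Re (a * cnj b)"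

end

theory Submission
  imports Defs
begin

text \<open>Where \<open>v \<noteq> 0\<close>, the momentum density splits as \<open>\<langle>iv, v'\<rangle> = (|v|\<^sup>2 - 1) Im (v'/v) + Im (v'/v)\<close>.
  Where \<open>|v| \<ge> m > 0\<close>, the first summand is dominated by \<open>((1 - |v|\<^sup>2)\<^sup>2 + |v'|\<^sup>2) / (2m)\<close>, hence
  integrable; the second is the derivative of every continuous phase of \<open>v\<close>. As \<open>1 - |v|\<^sup>2 \<in> L\<^sup>2\<close>, the
  limits of \<open>v\<close> at \<open>\<plusminus>\<infinity>\<close> are unimodular, so near \<open>\<plusminus>\<infinity>\<close> the function \<open>Arg (v / v(\<plusminus>\<infinity>))\<close> is a
  continuous phase tending to \<open>0\<close>. This gives the convergence of the truncated momentum and, for a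
  global phase \<open>\<phi>\<close>, the limits \<open>\<phi>(\<plusminus>\<infinity>)\<close> and the formula for the momentum.

  That a continuous phase \<open>\<theta>\<close> of a locally absolutely continuous \<open>v\<close> has derivative \<open>Im (v'/v)\<close> is
  shown by chaining local estimates: on a short interval \<open>[s, t]\<close> the increment \<open>\<theta> t - \<theta> s\<close> is
  \<open>Im (log (v t / v s))\<close>, which differs from \<open>\<integral>\<^sub>s\<^sup>t Im (v'/v)\<close> by at most \<open>\<epsilon> \<integral>\<^sub>s\<^sup>t |v'|\<close>.\<close>

section \<open>Lebesgue integrals on the real line\<close>

lemma set_integral_Im:
  fixes f :: "real \<Rightarrow> complex"
  assumes "set_integrable lborel A f"
  shows "set_integrable lborel A (\<lambda>x. Im (f x))"
    and "Im (LINT x:A|lborel. f x) = (LINT x:A|lborel. Im (f x))"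
proof -
  have e: "(\<lambda>x. Im (indicator A x *\<^sub>R f x)) = (\<lambda>x. indicator A x *\<^sub>R Im (f x))"
    by auto
  show "set_integrable lborel A (\<lambda>x. Im (f x))"
    using integrable_Im[of lborel "\<lambda>x. indicator A x *\<^sub>R f x"] assms
    unfolding set_integrable_def e by simp
  show "Im (LINT x:A|lborel. f x) = (LINT x:A|lborel. Im (f x))"
    unfolding set_lebesgue_integral_def
    using integral_bounded_linear[OF bounded_linear_Im, of lborel "\<lambda>x. indicator A x *\<^sub>R f x"] assms
    unfolding set_integrable_def e by simp
qed

lemma set_integral_atLeastAtMost_split:
  fixes f :: "real \<Rightarrow> 'a::{banach, second_countable_topology}"
  assumes "a \<le> s" "s \<le> t" "set_integrable lborel {a..t} f"
  shows "(LINT x:{a..t}|lborel. f x) = (LINT x:{a..s}|lborel. f x) + (LINT x:{s..t}|lborel. f x)"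
proof -
  have u: "{a..t} = {a..s} \<union> {s..t}" using assms by auto
  have "AE x in lborel. \<not> (x \<in> {a..s} \<and> x \<in> {s..t})"
    using AE_lborel_singleton[of s] by eventually_elim auto
  then show ?thesis
    unfolding u
    by (rule set_integral_Un_AE) (use assms u in \<open>auto intro: set_integrable_subset\<close>)
qed

lemma set_integral_singleton:
  "(LINT x:{a}|lborel. (g x :: 'a::{banach, second_countable_topology})) = 0"
  unfolding set_lebesgue_integral_def
  by (rule integral_eq_zero_AE, rule AE_mp[OF AE_lborel_singleton[of a]])
     (auto intro!: AE_I2 split: split_indicator)

lemma set_integral_le_integral:
  fixes f :: "real \<Rightarrow> real"
  assumes "integrable lborel f" "\<And>x. f x \<ge> 0" "A \<in> sets lborel"
  shows "(LINT x:A|lborel. f x) \<le> integral\<^sup>L lborel f"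
  unfolding set_lebesgue_integral_def
  by (rule integral_mono)
     (use assms integrable_mult_indicator[OF assms(3) assms(1)] in \<open>auto split: split_indicator\<close>)

lemma integrable_nonneg_tendsto_at_top_eq_0:
  fixes f :: "real \<Rightarrow> real"
  assumes fi: "integrable lborel f" and f0: "\<And>x. f x \<ge> 0" and lim: "(f \<longlongrightarrow> c) at_top"
  shows "c = 0"
proof (rule ccontr)
  assume "c \<noteq> 0"
  moreover have "c \<ge> 0" using lim f0 by (intro tendsto_lowerbound[OF lim]) (auto intro: always_eventually)
  ultimately have c0: "c > 0" by simp
  have "eventually (\<lambda>x. f x > c/2) at_top" using lim c0 by (intro order_tendstoD(1)) auto
  then obtain R where R: "\<And>x. x \<ge> R \<Longrightarrow> f x > c/2" by (auto simp: eventually_at_top_linorder)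
  define I where "I = integral\<^sup>L lborel f"
  have "I \<ge> 0" unfolding I_def using f0 by (intro integral_nonneg_AE) auto
  define N where "N = 2 * I / c + 1"
  have N0: "N > 0" using \<open>I \<ge> 0\<close> c0 by (simp add: N_def add_nonneg_pos)
  have i1: "set_integrable lborel {R..R+N} f"
    using fi unfolding set_integrable_def by (intro integrable_mult_indicator) auto
  have i2: "set_integrable lborel {R..R+N} (\<lambda>x. c/2)" by (rule borel_integrable_atLeastAtMost') auto
  have "(LINT x:{R..R+N}|lborel. c/2) \<le> (LINT x:{R..R+N}|lborel. f x)"
    by (rule set_integral_mono[OF i2 i1]) (use R in \<open>auto intro: less_imp_le\<close>)
  also have "\<dots> \<le> I" unfolding I_def by (rule set_integral_le_integral) (use fi f0 in auto)
  finally have "N * (c/2) \<le> I" using N0 by (simp add: set_integral_const)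
  moreover have "N * (c/2) = I + c/2" using c0 by (simp add: N_def field_simps)
  ultimately show False using c0 by simp
qed

lemma integrable_nonneg_tendsto_at_bot_eq_0:
  fixes f :: "real \<Rightarrow> real"
  assumes fi: "integrable lborel f" and f0: "\<And>x. f x \<ge> 0" and lim: "(f \<longlongrightarrow> c) at_bot"
  shows "c = 0"
proof (rule integrable_nonneg_tendsto_at_top_eq_0[of "\<lambda>x. f (- x)"])
  show "integrable lborel (\<lambda>x. f (- x))"
    using lborel_integrable_real_affine_iff[of "-1" f 0] fi by simp
  show "((\<lambda>x. f (- x)) \<longlongrightarrow> c) at_top"
    by (rule filterlim_compose[OF lim filterlim_uminus_at_bot_at_top])
qed (use f0 in auto)

lemma AE_eq_0_if_integrals_greaterThan_eq_0:
  fixes k :: "real \<Rightarrow> real"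
  assumes ki: "integrable lborel k" and kz: "\<And>x. (LINT y:{x<..}|lborel. k y) = 0"
  shows "AE x in lborel. k x = 0"
proof -
  define p where "p x = max 0 (k x)" for x
  define q where "q x = max 0 (- k x)" for x
  have pi: "integrable lborel p" and qi: "integrable lborel q"
    unfolding p_def q_def by (auto intro!: integrable_max ki)
  have density: "emeasure (density lborel (\<lambda>y. ennreal (f y))) {x<..} = ennreal (LINT y:{x<..}|lborel. f y)"
    if "integrable lborel f" "\<And>y. f y \<ge> 0" for f :: "real \<Rightarrow> real" and x
    using that by (subst emeasure_density) (auto intro!: nn_set_integral_eq_set_integral)
  have "density lborel (\<lambda>y. ennreal (p y)) = density lborel (\<lambda>y. ennreal (q y))"
  proof (rule measure_eqI_lessThan)
    fix x :: real
    show "emeasure (density lborel (\<lambda>y. ennreal (p y))) {x<..} < \<infinity>"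
      using density[OF pi] by (simp add: p_def)
    have "set_integrable lborel {x<..} p" "set_integrable lborel {x<..} q"
      using integrable_mult_indicator[of "{x<..}" lborel p] integrable_mult_indicator[of "{x<..}" lborel q] pi qi
      by (simp_all add: set_integrable_def)
    then have "(LINT y:{x<..}|lborel. p y) - (LINT y:{x<..}|lborel. q y) = (LINT y:{x<..}|lborel. k y)"
      by (subst set_integral_diff(2)[symmetric]) (auto simp: p_def q_def intro!: set_lebesgue_integral_cong)
    then show "emeasure (density lborel (\<lambda>y. ennreal (p y))) {x<..} = emeasure (density lborel (\<lambda>y. ennreal (q y))) {x<..}"
      using density[OF pi] density[OF qi] kz[of x] by (simp add: p_def q_def)
  qed simp_all
  then have "AE y in lborel. ennreal (p y) = ennreal (q y)"
    by (rule sigma_finite_measure.density_unique[OF sigma_finite_lborel, rotated 2]) (use pi qi in auto)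
  then show ?thesis
    by eventually_elim (simp add: p_def q_def max_def split: if_splits)
qed

lemma set_integral_greaterThan_Int_eq_0_if_interval_integrals_eq_0:
  fixes k :: "real \<Rightarrow> real"
  assumes ki: "\<And>x y. x \<le> y \<Longrightarrow> set_integrable lborel {x..y} k"
    and kz: "\<And>x y. x \<le> y \<Longrightarrow> (LINT t:{x..y}|lborel. k t) = 0"
    and ab: "a \<le> b"
  shows "(LINT y:{x<..} \<inter> {a..b}|lborel. k y) = 0"
proof (cases "x \<le> b")
  case True
  define c where "c = max x a"
  have mc: "set_borel_measurable lborel {c..b} k"
    using ki[of c b] True ab unfolding c_def set_integrable_def set_borel_measurable_def by auto
  have "(LINT y:{x<..} \<inter> {a..b}|lborel. k y) = (LINT y:{c..b}|lborel. k y)"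
  proof (rule set_integral_cong_set)
    show "set_borel_measurable lborel ({x<..} \<inter> {a..b}) k"
      by (rule set_borel_measurable_subset[OF mc]) (auto simp: c_def)
    show "AE y in lborel. (y \<in> {c..b}) = (y \<in> {x<..} \<inter> {a..b})"
      using AE_lborel_singleton[of x] by eventually_elim (auto simp: c_def)
  qed (rule mc)
  then show ?thesis using kz[of c b] True ab by (simp add: c_def)
next
  case False
  then have "{x<..} \<inter> {a..b} = {}" by auto
  then show ?thesis by (simp add: set_lebesgue_integral_def)
qed

lemma AE_eq_0_if_interval_integrals_eq_0:
  fixes k :: "real \<Rightarrow> real"
  assumes ki: "\<And>x y. x \<le> y \<Longrightarrow> set_integrable lborel {x..y} k"
    and kz: "\<And>x y. x \<le> y \<Longrightarrow> (LINT t:{x..y}|lborel. k t) = 0"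
  shows "AE x in lborel. k x = 0"
proof -
  have "AE x in lborel. x \<in> {- real n..real n} \<longrightarrow> k x = 0" for n :: nat
  proof -
    define kn where "kn x = indicator {- real n..real n} x * k x" for x
    have "integrable lborel kn"
      using ki[of "- real n" "real n"] unfolding kn_def[abs_def] by (simp add: set_integrable_def)
    moreover have "(LINT y:{x<..}|lborel. kn y) = (LINT y:{x<..} \<inter> {- real n..real n}|lborel. k y)" for x
      unfolding set_lebesgue_integral_def kn_def
      by (intro Bochner_Integration.integral_cong) (auto split: split_indicator)
    ultimately have "AE x in lborel. kn x = 0"
      using set_integral_greaterThan_Int_eq_0_if_interval_integrals_eq_0[OF ki kz]
      by (intro AE_eq_0_if_integrals_greaterThan_eq_0) auto
    then show ?thesis by eventually_elim (auto simp: kn_def)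
  qed
  then have "AE x in lborel. \<forall>n::nat. x \<in> {- real n..real n} \<longrightarrow> k x = 0"
    unfolding AE_all_countable by blast
  then show ?thesis
  proof eventually_elim
    case (elim x)
    obtain n :: nat where "\<bar>x\<bar> \<le> real n" using real_arch_simple by blast
    then have "x \<in> {- real n..real n}" by auto
    with elim show "k x = 0" by blast
  qed
qed

lemma tendsto_set_integral_at_top_if_decomposition:
  fixes f w g \<theta> :: "real \<Rightarrow> real"
  assumes w: "set_integrable lborel {b..} w" and \<theta>: "(\<theta> \<longlongrightarrow> c) at_top"
    and g: "\<And>t. b \<le> t \<Longrightarrow> set_integrable lborel {b..t} g \<and> \<theta> t - \<theta> b = (LINT x:{b..t}|lborel. g x)"
    and f: "\<And>x. b \<le> x \<Longrightarrow> f x = w x + g x"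
  shows "((\<lambda>t. LINT x:{b..t}|lborel. f x) \<longlongrightarrow> (LINT x:{b..}|lborel. w x) + (c - \<theta> b)) at_top"
proof (rule Lim_transform_eventually)
  show "((\<lambda>t. (LINT x:{b..t}|lborel. w x) + (\<theta> t - \<theta> b)) \<longlongrightarrow> (LINT x:{b..}|lborel. w x) + (c - \<theta> b)) at_top"
    by (intro tendsto_intros tendsto_set_lebesgue_integral_at_top w \<theta>) auto
  have "(LINT x:{b..t}|lborel. f x) = (LINT x:{b..t}|lborel. w x) + (\<theta> t - \<theta> b)" if "b \<le> t" for t
  proof -
    have "set_integrable lborel {b..t} w" by (rule set_integrable_subset[OF w]) auto
    then have "(LINT x:{b..t}|lborel. w x + g x) = (LINT x:{b..t}|lborel. w x) + (LINT x:{b..t}|lborel. g x)"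
      using g[OF that] by (simp add: set_integral_add)
    moreover have "(LINT x:{b..t}|lborel. f x) = (LINT x:{b..t}|lborel. w x + g x)"
      using that by (intro set_lebesgue_integral_cong) (auto simp: f)
    ultimately show ?thesis using g[OF that] by simp
  qed
  then show "eventually (\<lambda>t. (LINT x:{b..t}|lborel. w x) + (\<theta> t - \<theta> b) = (LINT x:{b..t}|lborel. f x)) at_top"
    unfolding eventually_at_top_linorder by (intro exI[of _ b]) simp
qed

lemma tendsto_set_integral_at_bot_if_decomposition:
  fixes f w g \<theta> :: "real \<Rightarrow> real"
  assumes w: "set_integrable lborel {..a} w" and \<theta>: "(\<theta> \<longlongrightarrow> c) at_bot"
    and g: "\<And>s. s \<le> a \<Longrightarrow> set_integrable lborel {s..a} g \<and> \<theta> a - \<theta> s = (LINT x:{s..a}|lborel. g x)"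
    and f: "\<And>x. x \<le> a \<Longrightarrow> f x = w x + g x"
  shows "((\<lambda>s. LINT x:{s..a}|lborel. f x) \<longlongrightarrow> (LINT x:{..a}|lborel. w x) + (\<theta> a - c)) at_bot"
proof (rule Lim_transform_eventually)
  show "((\<lambda>s. (LINT x:{s..a}|lborel. w x) + (\<theta> a - \<theta> s)) \<longlongrightarrow> (LINT x:{..a}|lborel. w x) + (\<theta> a - c)) at_bot"
    by (intro tendsto_intros tendsto_set_lebesgue_integral_at_bot w \<theta>) auto
  have "(LINT x:{s..a}|lborel. f x) = (LINT x:{s..a}|lborel. w x) + (\<theta> a - \<theta> s)" if "s \<le> a" for s
  proof -
    have "set_integrable lborel {s..a} w" by (rule set_integrable_subset[OF w]) auto
    then have "(LINT x:{s..a}|lborel. w x + g x) = (LINT x:{s..a}|lborel. w x) + (LINT x:{s..a}|lborel. g x)"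
      using g[OF that] by (simp add: set_integral_add)
    moreover have "(LINT x:{s..a}|lborel. f x) = (LINT x:{s..a}|lborel. w x + g x)"
      using that by (intro set_lebesgue_integral_cong) (auto simp: f)
    ultimately show ?thesis using g[OF that] by simp
  qed
  then show "eventually (\<lambda>s. (LINT x:{s..a}|lborel. w x) + (\<theta> a - \<theta> s) = (LINT x:{s..a}|lborel. f x)) at_bot"
    unfolding eventually_at_bot_linorder by (intro exI[of _ a]) simp
qed

lemma tendsto_set_integral_symmetric:
  fixes f :: "real \<Rightarrow> real"
  assumes f: "\<And>s t. set_integrable lborel {s..t} f" and ab: "a \<le> b"
    and top: "((\<lambda>t. LINT x:{b..t}|lborel. f x) \<longlongrightarrow> A) at_top"
    and bot: "((\<lambda>s. LINT x:{s..a}|lborel. f x) \<longlongrightarrow> B) at_bot"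
  shows "((\<lambda>R. LINT x:{-R..R}|lborel. f x) \<longlongrightarrow> B + (LINT x:{a..b}|lborel. f x) + A) at_top"
proof (rule Lim_transform_eventually)
  have "((\<lambda>R. LINT x:{-R..a}|lborel. f x) \<longlongrightarrow> B) at_top"
    using filterlim_compose[OF bot filterlim_uminus_at_bot_at_top] by simp
  then show "((\<lambda>R. (LINT x:{-R..a}|lborel. f x) + (LINT x:{a..b}|lborel. f x) + (LINT x:{b..R}|lborel. f x))
      \<longlongrightarrow> B + (LINT x:{a..b}|lborel. f x) + A) at_top"
    by (intro tendsto_intros top)
  have "(LINT x:{-R..R}|lborel. f x)
      = (LINT x:{-R..a}|lborel. f x) + (LINT x:{a..b}|lborel. f x) + (LINT x:{b..R}|lborel. f x)"
    if "R \<ge> max (- a) b" for R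
    using that ab f set_integral_atLeastAtMost_split[of "-R" a R f] set_integral_atLeastAtMost_split[of a b R f]
    by simp
  then show "eventually (\<lambda>R. (LINT x:{-R..a}|lborel. f x) + (LINT x:{a..b}|lborel. f x)
      + (LINT x:{b..R}|lborel. f x) = (LINT x:{-R..R}|lborel. f x)) at_top"
    unfolding eventually_at_top_linorder by (intro exI[of _ "max (- a) b"]) simp
qed

lemma set_integral_atMost_plus_atLeast:
  fixes w :: "real \<Rightarrow> real"
  assumes "integrable lborel w"
  shows "(LINT x:{..a}|lborel. w x) + (LINT x:{a..}|lborel. w x) = integral\<^sup>L lborel w"
proof -
  have "set_integrable lborel S w" if "S \<in> sets borel" for S :: "real set"
    using integrable_mult_indicator[of S lborel w] assms that unfolding set_integrable_def by simp
  moreover have "AE x in lborel. \<not> (x \<in> {..a} \<and> x \<in> {a..})"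
    using AE_lborel_singleton[of a] by eventually_elim auto
  ultimately have "(LINT x:{..a} \<union> {a..}|lborel. w x) = (LINT x:{..a}|lborel. w x) + (LINT x:{a..}|lborel. w x)"
    by (intro set_integral_Un_AE) auto
  moreover have "{..a} \<union> {a..} = UNIV" by auto
  ultimately show ?thesis by (simp add: set_lebesgue_integral_def)
qed

lemma increment_bound_if_local_bound:
  fixes f g h :: "real \<Rightarrow> real"
  assumes ab: "a \<le> b" and ig: "set_integrable lborel {a..b} g" and ih: "set_integrable lborel {a..b} h"
    and d: "d > 0" and local: "\<forall>s t. a \<le> s \<longrightarrow> s \<le> t \<longrightarrow> t \<le> b \<longrightarrow> t - s < d \<longrightarrow>
      \<bar>f t - f s - (LINT x:{s..t}|lborel. g x)\<bar> \<le> e * (LINT x:{s..t}|lborel. h x)"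
  shows "\<bar>f b - f a - (LINT x:{a..b}|lborel. g x)\<bar> \<le> e * (LINT x:{a..b}|lborel. h x)"
proof -
  define T where "T n = min b (a + real n * (d/2))" for n
  have T: "a \<le> T n" "T n \<le> T (Suc n)" "T (Suc n) \<le> b" "T (Suc n) - T n < d" for n
    using ab d by (auto simp: T_def min_def field_simps)
  have "\<bar>f (T n) - f a - (LINT x:{a..T n}|lborel. g x)\<bar> \<le> e * (LINT x:{a..T n}|lborel. h x)" for n
  proof (induction n)
    case 0
    show ?case using ab by (simp add: T_def set_integral_singleton)
  next
    case (Suc n)
    have "set_integrable lborel {a..T (Suc n)} g" "set_integrable lborel {a..T (Suc n)} h"
      using ig ih T(3)[of n] by (auto intro: set_integrable_subset)
    then have "(LINT x:{a..T (Suc n)}|lborel. g x) = (LINT x:{a..T n}|lborel. g x) + (LINT x:{T n..T (Suc n)}|lborel. g x)"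
      and "(LINT x:{a..T (Suc n)}|lborel. h x) = (LINT x:{a..T n}|lborel. h x) + (LINT x:{T n..T (Suc n)}|lborel. h x)"
      using T[of n] by (auto intro: set_integral_atLeastAtMost_split)
    moreover have "\<bar>f (T (Suc n)) - f (T n) - (LINT x:{T n..T (Suc n)}|lborel. g x)\<bar>
        \<le> e * (LINT x:{T n..T (Suc n)}|lborel. h x)"
      using local T[of n] by blast
    ultimately show ?case using Suc.IH by (simp add: algebra_simps)
  qed
  moreover obtain n where "real n > (b - a) / (d/2)" using reals_Archimedean2 by blast
  then have "T n = b" using d by (simp add: T_def field_simps)
  ultimately show ?thesis by metis
qed

lemma increment_eq_integral_if_local_bound:
  fixes f g h :: "real \<Rightarrow> real"
  assumes ab: "a \<le> b" and ig: "set_integrable lborel {a..b} g" and ih: "set_integrable lborel {a..b} h"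
    and local: "\<And>e. e > 0 \<Longrightarrow> \<exists>d>0. \<forall>s t. a \<le> s \<longrightarrow> s \<le> t \<longrightarrow> t \<le> b \<longrightarrow> t - s < d \<longrightarrow>
      \<bar>f t - f s - (LINT x:{s..t}|lborel. g x)\<bar> \<le> e * (LINT x:{s..t}|lborel. h x)"
  shows "f b - f a = (LINT x:{a..b}|lborel. g x)"
proof -
  define D where "D = f b - f a - (LINT x:{a..b}|lborel. g x)"
  define H where "H = (LINT x:{a..b}|lborel. h x)"
  have "\<bar>D\<bar> \<le> 0 + e" if "e > 0" for e
  proof -
    have "e / (\<bar>H\<bar> + 1) > 0" using that by simp
    then have "\<bar>D\<bar> \<le> e / (\<bar>H\<bar> + 1) * H"
      unfolding D_def H_def using local increment_bound_if_local_bound[OF ab ig ih] by blast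
    also have "\<dots> \<le> e / (\<bar>H\<bar> + 1) * (\<bar>H\<bar> + 1)" using that by (intro mult_left_mono) auto
    finally show ?thesis by simp
  qed
  then have "D = 0" using field_le_epsilon[of "\<bar>D\<bar>" 0] by simp
  then show ?thesis by (simp add: D_def)
qed

section \<open>Weak derivatives\<close>

lemma weak_deriv_imp_continuous:
  fixes f g :: "real \<Rightarrow> 'a::euclidean_space"
  assumes "weak_deriv f g"
  shows "continuous_on UNIV f"
proof (intro continuous_at_imp_continuous_on ballI)
  fix x :: real
  have f: "f y = f (x - 1) + integral {x - 1..y} g" if "y \<in> {x - 1..x + 1}" for y
  proof -
    have i: "set_integrable lborel {x - 1..y} g" and "f y - f (x - 1) = (LINT t:{x - 1..y}|lborel. g t)"
      using assms that unfolding weak_deriv_def by auto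
    then have "f y = f (x - 1) + (LINT t:{x - 1..y}|lborel. g t)" by (metis add.commute diff_eq_eq)
    with set_borel_integral_eq_integral(2)[OF i] show ?thesis by simp
  qed
  have "set_integrable lborel {x - 1..x + 1} g"
    using assms unfolding weak_deriv_def by simp
  then have "g integrable_on {x - 1..x + 1}" by (rule set_borel_integral_eq_integral(1))
  then have "continuous_on {x - 1..x + 1} (\<lambda>y. integral {x - 1..y} g)"
    by (rule indefinite_integral_continuous_1)
  then have "continuous_on {x - 1..x + 1} (\<lambda>y. f (x - 1) + integral {x - 1..y} g)"
    by (rule continuous_on_add[OF continuous_on_const])
  then have "continuous_on {x - 1..x + 1} f" by (rule continuous_on_eq) (rule f[symmetric])
  moreover have "x \<in> interior {x - 1..x + 1}" by simp
  ultimately show "isCont f x" by (rule continuous_on_interior)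
qed

lemma weak_deriv_norm_bound:
  assumes "weak_deriv f g" "s \<le> t"
  shows "norm (f t - f s) \<le> (LINT x:{s..t}|lborel. norm (g x))"
  using assms set_integral_norm_bound unfolding weak_deriv_def by metis

lemma weak_deriv_borel_measurable:
  fixes f g :: "real \<Rightarrow> real"
  assumes "weak_deriv f g"
  shows "g \<in> borel_measurable lborel"
proof (rule borel_measurable_LIMSEQ_real[where u="\<lambda>n x. indicator {- real n..real n} x * g x"])
  fix n :: nat
  have "set_integrable lborel {- real n..real n} g"
    using assms unfolding weak_deriv_def by simp
  then show "(\<lambda>x. indicator {- real n..real n} x * g x) \<in> borel_measurable lborel"
    unfolding set_integrable_def by (simp add: borel_measurable_integrable)
next
  fix x :: real
  obtain N :: nat where "\<bar>x\<bar> \<le> real N" using real_arch_simple by blast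
  then have "eventually (\<lambda>n. indicator {- real n..real n} x * g x = g x) sequentially"
    unfolding eventually_sequentially by (intro exI[of _ N]) (auto simp: indicator_def)
  then show "(\<lambda>n. indicator {- real n..real n} x * g x) \<longlonglongrightarrow> g x"
    by (rule tendsto_eventually)
qed

lemma weak_deriv_AE_unique:
  fixes f g h :: "real \<Rightarrow> real"
  assumes "weak_deriv f g" "weak_deriv f h"
  shows "AE x in lborel. g x = h x"
proof -
  have "AE x in lborel. g x - h x = 0"
    using assms unfolding weak_deriv_def
    by (intro AE_eq_0_if_interval_integrals_eq_0) (auto simp: set_integral_diff)
  then show ?thesis by simp
qed

section \<open>The phase of a weakly differentiable function\<close>

lemma Im_Ln_polar_quotient:
  fixes r1 r2 t1 t2 :: real and c :: complex
  assumes "r1 > 0" "r2 > 0" "c \<noteq> 0" "\<bar>t2 - t1\<bar> < pi"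
  shows "Im (ln ((of_real r2 * exp (\<i> * of_real t2) * c) / (of_real r1 * exp (\<i> * of_real t1) * c))) = t2 - t1"
proof -
  have "exp (of_real (ln (r2/r1)) :: complex) = of_real (exp (ln (r2/r1)))" by (rule exp_of_real)
  also have "exp (ln (r2/r1)) = r2/r1" using assms by simp
  finally have "(of_real r2 * exp (\<i> * of_real t2) * c) / (of_real r1 * exp (\<i> * of_real t1) * c)
      = exp (of_real (ln (r2/r1)) + \<i> * of_real (t2 - t1))"
    using assms by (simp add: exp_add exp_diff field_simps distrib_left right_diff_distrib)
  moreover have "ln (exp (of_real (ln (r2/r1)) + \<i> * of_real (t2 - t1))) = of_real (ln (r2/r1)) + \<i> * of_real (t2 - t1)"
    using assms by (intro Ln_exp) auto
  ultimately show ?thesis by simp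
qed

lemma abs_Im_Ln_one_plus_minus_le:
  assumes "norm u \<le> 1/2"
  shows "\<bar>Im (ln (1 + u)) - Im u\<bar> \<le> 2 * (norm u)\<^sup>2"
proof -
  have "\<bar>Im (ln (1 + u)) - Im u\<bar> \<le> norm (ln (1 + u) - u)"
    using abs_Im_le_cmod[of "ln (1 + u) - u"] by simp
  also have "\<dots> \<le> norm u ^ 2 / (1 - norm u)" by (rule Ln_approx_linear) (use assms in auto)
  also have "\<dots> \<le> norm u ^ 2 / (1/2)" using assms by (intro divide_left_mono) auto
  finally show ?thesis by simp
qed

lemma Im_increment_divide_integral_estimate:
  fixes v dv :: "real \<Rightarrow> complex"
  assumes wd: "weak_deriv v dv" and st: "s \<le> t"
    and osc: "\<forall>r\<in>{s..t}. cmod (inverse (v s) - inverse (v r)) \<le> \<delta>"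
    and g: "set_integrable lborel {s..t} (\<lambda>x. Im (dv x / v x))"
  shows "\<bar>Im ((v t - v s) / v s) - (LINT x:{s..t}|lborel. Im (dv x / v x))\<bar>
    \<le> \<delta> * (LINT x:{s..t}|lborel. cmod (dv x))"
proof -
  have dv: "set_integrable lborel {s..t} dv" and "v t - v s = (LINT r:{s..t}|lborel. dv r)"
    using wd st unfolding weak_deriv_def by auto
  then have "Im ((v t - v s) / v s) = (LINT r:{s..t}|lborel. Im (dv r / v s))"
    using set_integral_Im(2)[of "{s..t}" "\<lambda>r. dv r / v s"] by simp
  moreover have frozen: "set_integrable lborel {s..t} (\<lambda>r. Im (dv r / v s))"
    using dv by (intro set_integral_Im(1)) simp
  ultimately have "\<bar>Im ((v t - v s) / v s) - (LINT r:{s..t}|lborel. Im (dv r / v r))\<bar>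
      = \<bar>LINT r:{s..t}|lborel. Im (dv r / v s) - Im (dv r / v r)\<bar>"
    using g by (simp add: set_integral_diff)
  also have "\<dots> \<le> (LINT r:{s..t}|lborel. norm (Im (dv r / v s) - Im (dv r / v r)))"
    using set_integral_norm_bound[OF set_integral_diff(1)[OF frozen g]] by simp
  also have "\<dots> \<le> (LINT r:{s..t}|lborel. \<delta> * cmod (dv r))"
  proof (rule set_integral_mono)
    show "set_integrable lborel {s..t} (\<lambda>r. norm (Im (dv r / v s) - Im (dv r / v r)))"
      by (intro set_integrable_norm set_integral_diff(1) frozen g)
    show "set_integrable lborel {s..t} (\<lambda>r. \<delta> * cmod (dv r))"
      using dv by (simp add: set_integrable_norm)
    fix r assume r: "r \<in> {s..t}"
    have "norm (Im (dv r / v s) - Im (dv r / v r)) = \<bar>Im (dv r * (inverse (v s) - inverse (v r)))\<bar>"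
      by (simp add: divide_inverse right_diff_distrib)
    also have "\<dots> \<le> cmod (dv r) * cmod (inverse (v s) - inverse (v r))"
      using abs_Im_le_cmod by (metis norm_mult)
    also have "\<dots> \<le> cmod (dv r) * \<delta>" using osc r by (intro mult_left_mono) auto
    finally show "norm (Im (dv r / v s) - Im (dv r / v r)) \<le> \<delta> * cmod (dv r)" by (simp add: mult.commute)
  qed
  finally show ?thesis by simp
qed

lemma phase_increment_local_estimate:
  fixes v dv :: "real \<Rightarrow> complex"
  assumes wd: "weak_deriv v dv" and st: "s \<le> t" and m: "m > 0" "\<forall>r\<in>{s..t}. m \<le> cmod (v r)"
    and near: "cmod (v t - v s) \<le> min (m/2) (e * m\<^sup>2 / 4)"
    and osc: "\<forall>r\<in>{s..t}. cmod (inverse (v s) - inverse (v r)) \<le> e/2"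
    and g: "set_integrable lborel {s..t} (\<lambda>x. Im (dv x / v x))"
  shows "\<bar>Im (ln (v t / v s)) - (LINT x:{s..t}|lborel. Im (dv x / v x))\<bar> \<le> e * (LINT x:{s..t}|lborel. cmod (dv x))"
proof -
  define I where "I = (LINT x:{s..t}|lborel. cmod (dv x))"
  define u where "u = (v t - v s) / v s"
  have vs: "m \<le> cmod (v s)" using m st by auto
  then have "v s \<noteq> 0" using m by auto
  then have vtvs: "v t / v s = 1 + u" by (simp add: u_def field_simps)
  have dI: "cmod (v t - v s) \<le> I" unfolding I_def by (rule weak_deriv_norm_bound[OF wd st])
  have nu: "norm u \<le> cmod (v t - v s) / m"
    unfolding u_def norm_divide using m vs by (intro divide_left_mono) (auto intro!: mult_pos_pos)
  have "cmod (v t - v s) / m \<le> 1/2" using near m by (simp add: field_simps)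
  then have "\<bar>Im (ln (1 + u)) - Im u\<bar> \<le> 2 * (norm u)\<^sup>2"
    using nu by (intro abs_Im_Ln_one_plus_minus_le) linarith
  also have "\<dots> = 2 * (norm u * norm u)" by (simp add: power2_eq_square)
  also have "\<dots> \<le> 2 * (cmod (v t - v s) / m * (I / m))"
  proof -
    have "norm u \<le> I / m" using nu divide_right_mono[OF dI, of m] m by linarith
    then show ?thesis using nu m by (intro mult_left_mono mult_mono) auto
  qed
  also have "\<dots> \<le> e/2 * I"
  proof -
    have "I * (4 * cmod (v t - v s)) \<le> I * (e * m\<^sup>2)"
      using near dI by (intro mult_left_mono) (auto intro: order_trans[OF norm_ge_zero])
    then show ?thesis using m by (simp add: field_simps power2_eq_square)
  qed
  finally have "\<bar>Im (ln (1 + u)) - Im u\<bar> \<le> e/2 * I" .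
  moreover have "\<bar>Im u - (LINT x:{s..t}|lborel. Im (dv x / v x))\<bar> \<le> e/2 * I"
    unfolding u_def I_def by (rule Im_increment_divide_integral_estimate[OF wd st osc g])
  ultimately show ?thesis unfolding vtvs I_def[symmetric] by linarith
qed

lemma norm_bounded_below_if_compact_nonvanishing:
  fixes f :: "'a::topological_space \<Rightarrow> 'b::real_normed_vector"
  assumes "compact S" "continuous_on S f" "\<forall>x\<in>S. f x \<noteq> 0"
  obtains m where "m > 0" "\<forall>x\<in>S. m \<le> norm (f x)"
proof (cases "S = {}")
  case False
  obtain x0 where "x0 \<in> S" "\<forall>y\<in>S. norm (f x0) \<le> norm (f y)"
    using continuous_attains_inf[OF assms(1) False continuous_on_norm[OF assms(2)]] by blast
  with assms(3) show ?thesis by (intro that[of "norm (f x0)"]) auto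
qed (use that[of 1] in auto)

lemma set_integrable_Im_divide_if_bounded_below:
  fixes v dv :: "real \<Rightarrow> complex"
  assumes wd: "weak_deriv v dv" and m: "m > 0" "\<forall>x\<in>{s..t}. m \<le> cmod (v x)"
  shows "set_integrable lborel {s..t} (\<lambda>x. Im (dv x / v x))"
proof (cases "s \<le> t")
  case True
  have dv: "set_integrable lborel {s..t} dv" using wd True unfolding weak_deriv_def by simp
  have "v \<in> borel_measurable lborel"
    using weak_deriv_imp_continuous[OF wd] by (simp add: borel_measurable_continuous_onI)
  moreover have "(\<lambda>x. indicator {s..t} x *\<^sub>R dv x) \<in> borel_measurable lborel"
    using dv unfolding set_integrable_def by (rule borel_measurable_integrable)
  ultimately have "(\<lambda>x. Im ((indicator {s..t} x *\<^sub>R dv x) / v x)) \<in> borel_measurable lborel"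
    by measurable
  moreover have "(\<lambda>x. Im ((indicator {s..t} x *\<^sub>R dv x) / v x)) = (\<lambda>x. indicator {s..t} x *\<^sub>R Im (dv x / v x))"
    by (rule ext) (simp split: split_indicator)
  ultimately have meas: "set_borel_measurable lborel {s..t} (\<lambda>x. Im (dv x / v x))"
    unfolding set_borel_measurable_def by simp
  show ?thesis
  proof (rule set_integrable_bound[OF _ meas])
    show "set_integrable lborel {s..t} (\<lambda>x. cmod (dv x) / m)"
      using dv by (simp add: set_integrable_norm)
    show "AE x in lborel. x \<in> {s..t} \<longrightarrow> norm (Im (dv x / v x)) \<le> norm (cmod (dv x) / m)"
    proof (intro AE_I2 impI)
      fix x assume "x \<in> {s..t}"
      then have "m \<le> cmod (v x)" using m by blast
      then have "cmod (dv x) / cmod (v x) \<le> cmod (dv x) / m" using m by (intro divide_left_mono) (auto intro!: mult_pos_pos)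
      then show "norm (Im (dv x / v x)) \<le> norm (cmod (dv x) / m)"
        using abs_Im_le_cmod[of "dv x / v x"] m by (simp add: norm_divide)
    qed
  qed
qed (simp add: set_integrable_def)

lemma phase_increment_local_bound:
  fixes v dv :: "real \<Rightarrow> complex" and \<theta> :: "real \<Rightarrow> real"
  assumes wd: "weak_deriv v dv" and m: "m > 0" "\<forall>x\<in>{a..b}. m \<le> cmod (v x)"
    and \<theta>: "continuous_on {a..b} \<theta>" and c: "c \<noteq> 0"
    and polar: "\<forall>x\<in>{a..b}. \<exists>r>0. v x = of_real r * exp (\<i> * of_real (\<theta> x)) * c" and e: "e > 0"
  shows "\<exists>d>0. \<forall>s t. a \<le> s \<longrightarrow> s \<le> t \<longrightarrow> t \<le> b \<longrightarrow> t - s < d \<longrightarrow>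
    \<bar>\<theta> t - \<theta> s - (LINT x:{s..t}|lborel. Im (dv x / v x))\<bar> \<le> e * (LINT x:{s..t}|lborel. cmod (dv x))"
proof -
  have vc: "continuous_on {a..b} v"
    using weak_deriv_imp_continuous[OF wd] by (rule continuous_on_subset) simp
  have "\<forall>x\<in>{a..b}. v x \<noteq> 0" using m by force
  then have u\<theta>: "uniformly_continuous_on {a..b} \<theta>" and uv: "uniformly_continuous_on {a..b} v"
    and uinv: "uniformly_continuous_on {a..b} (\<lambda>x. inverse (v x))"
    using \<theta> vc by (auto intro!: compact_uniformly_continuous continuous_intros)
  have \<epsilon>: "min (m/2) (e * m\<^sup>2 / 4) > 0" "e/2 > 0" using m e by auto
  \<comment> \<open>\<open>d1\<close> keeps \<open>\<theta> t - \<theta> s\<close> in \<open>(-\<pi>, \<pi>)\<close>, where it is the principal argument of \<open>v t / v s\<close>\<close>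
  obtain d1 where "d1 > 0"
    and d1: "\<And>x x'. x \<in> {a..b} \<Longrightarrow> x' \<in> {a..b} \<Longrightarrow> dist x' x < d1 \<Longrightarrow> dist (\<theta> x') (\<theta> x) < pi"
    by (rule uniformly_continuous_onE[OF u\<theta> pi_gt_zero]) blast
  obtain d2 where "d2 > 0" and d2: "\<And>x x'. x \<in> {a..b} \<Longrightarrow> x' \<in> {a..b} \<Longrightarrow> dist x' x < d2 \<Longrightarrow>
      dist (v x') (v x) < min (m/2) (e * m\<^sup>2 / 4)"
    by (rule uniformly_continuous_onE[OF uv \<epsilon>(1)]) blast
  obtain d3 where "d3 > 0" and d3: "\<And>x x'. x \<in> {a..b} \<Longrightarrow> x' \<in> {a..b} \<Longrightarrow> dist x' x < d3 \<Longrightarrow>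
      dist (inverse (v x')) (inverse (v x)) < e/2"
    by (rule uniformly_continuous_onE[OF uinv \<epsilon>(2)]) blast
  show ?thesis
  proof (intro exI[of _ "min d1 (min d2 d3)"] conjI allI impI)
    fix s t assume st: "a \<le> s" "s \<le> t" "t \<le> b" "t - s < min d1 (min d2 d3)"
    have close: "r \<in> {a..b}" "dist r s < min d1 (min d2 d3)" if "r \<in> {s..t}" for r
      using st that by (auto simp: dist_real_def)
    obtain rs rt where "rs > 0" "v s = of_real rs * exp (\<i> * of_real (\<theta> s)) * c"
      "rt > 0" "v t = of_real rt * exp (\<i> * of_real (\<theta> t)) * c"
      using polar st by (meson atLeastAtMost_iff order.trans)
    moreover have "\<bar>\<theta> t - \<theta> s\<bar> < pi" using d1[of s t] close[of t] st by (simp add: dist_real_def)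
    ultimately have phase: "\<theta> t - \<theta> s = Im (ln (v t / v s))"
      using Im_Ln_polar_quotient c by simp
    have ab: "s \<in> {a..b}" "t \<in> {a..b}" using st by auto
    have "dist (v t) (v s) < min (m/2) (e * m\<^sup>2 / 4)"
      using d2[OF ab] close(2)[of t] st by simp
    then have near: "cmod (v t - v s) \<le> min (m/2) (e * m\<^sup>2 / 4)" by (simp add: dist_norm)
    have osc: "\<forall>r\<in>{s..t}. cmod (inverse (v s) - inverse (v r)) \<le> e/2"
    proof
      fix r assume "r \<in> {s..t}"
      then have "dist (inverse (v r)) (inverse (v s)) < e/2" using d3[OF ab(1) close(1)] close(2) by simp
      then show "cmod (inverse (v s) - inverse (v r)) \<le> e/2" by (simp add: dist_norm norm_minus_commute)
    qed
    show "\<bar>\<theta> t - \<theta> s - (LINT x:{s..t}|lborel. Im (dv x / v x))\<bar>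
        \<le> e * (LINT x:{s..t}|lborel. cmod (dv x))"
      unfolding phase using m st near osc
      by (intro phase_increment_local_estimate[OF wd] set_integrable_Im_divide_if_bounded_below[OF wd]) auto
  qed (use \<open>d1 > 0\<close> \<open>d2 > 0\<close> \<open>d3 > 0\<close> in auto)
qed

lemma phase_increment_eq_integral:
  fixes v dv :: "real \<Rightarrow> complex" and \<theta> :: "real \<Rightarrow> real"
  assumes wd: "weak_deriv v dv" and ab: "a \<le> b" and nz: "\<forall>x\<in>{a..b}. v x \<noteq> 0"
    and \<theta>: "continuous_on {a..b} \<theta>" and c: "c \<noteq> 0"
    and polar: "\<forall>x\<in>{a..b}. \<exists>r>0. v x = of_real r * exp (\<i> * of_real (\<theta> x)) * c"
  shows "set_integrable lborel {a..b} (\<lambda>x. Im (dv x / v x))"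
    and "\<theta> b - \<theta> a = (LINT x:{a..b}|lborel. Im (dv x / v x))"
proof -
  have "continuous_on {a..b} v"
    using weak_deriv_imp_continuous[OF wd] by (rule continuous_on_subset) simp
  then obtain m where m: "m > 0" "\<forall>x\<in>{a..b}. m \<le> cmod (v x)"
    using norm_bounded_below_if_compact_nonvanishing[OF compact_Icc _ nz] by blast
  then show g: "set_integrable lborel {a..b} (\<lambda>x. Im (dv x / v x))"
    by (rule set_integrable_Im_divide_if_bounded_below[OF wd])
  have "set_integrable lborel {a..b} (\<lambda>x. cmod (dv x))"
    using wd ab unfolding weak_deriv_def by (simp add: set_integrable_norm)
  with ab g show "\<theta> b - \<theta> a = (LINT x:{a..b}|lborel. Im (dv x / v x))"
    using phase_increment_local_bound[OF wd m \<theta> c polar] by (rule increment_eq_integral_if_local_bound)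
qed

lemma Re_divide_pos_if_near_unit:
  assumes "cmod l = 1" "cmod (z - l) < 1/2"
  shows "Re (z / l) > 0"
proof -
  have "l \<noteq> 0" using assms(1) by auto
  then have "z / l - 1 = (z - l) / l" by (simp add: diff_divide_distrib)
  then have "cmod (z / l - 1) < 1/2" using assms by (simp add: norm_divide)
  then have "\<bar>Re (z / l) - 1\<bar> < 1/2" using abs_Re_le_cmod[of "z / l - 1"] by simp
  then show ?thesis by linarith
qed

lemma norm_ge_half_if_near_unit:
  assumes "cmod l = 1" "cmod (z - l) < 1/2"
  shows "1/2 \<le> cmod z"
  using assms norm_triangle_ineq2[of l z] by (simp add: norm_minus_commute)

lemma Arg_increment_eq_integral_near_unit:
  fixes v dv :: "real \<Rightarrow> complex"
  assumes wd: "weak_deriv v dv" and l: "cmod l = 1" and st: "s \<le> t"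
    and near: "\<forall>x\<in>{s..t}. cmod (v x - l) < 1/2"
  shows "set_integrable lborel {s..t} (\<lambda>x. Im (dv x / v x))
    \<and> Arg (v t / l) - Arg (v s / l) = (LINT x:{s..t}|lborel. Im (dv x / v x))"
proof -
  have l0: "l \<noteq> 0" using l by auto
  have Re: "Re (v x / l) > 0" if "x \<in> {s..t}" for x
    using Re_divide_pos_if_near_unit[OF l] near that by blast
  have "continuous_on {s..t} (\<lambda>x. v x / l)"
    using weak_deriv_imp_continuous[OF wd] l0 by (auto intro!: continuous_intros intro: continuous_on_subset)
  then have "continuous_on {s..t} (\<lambda>x. Arg (v x / l))"
    using Re by (intro continuous_on_Arg') (force simp: complex_nonpos_Reals_iff)+
  moreover have "\<forall>x\<in>{s..t}. \<exists>r>0. v x = of_real r * exp (\<i> * of_real (Arg (v x / l))) * l"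
  proof
    fix x assume x: "x \<in> {s..t}"
    have "v x = rcis (cmod (v x / l)) (Arg (v x / l)) * l" using l0 by (simp add: rcis_cmod_Arg)
    then have "v x = of_real (cmod (v x / l)) * exp (\<i> * of_real (Arg (v x / l))) * l"
      by (simp add: rcis_def cis_conv_exp)
    moreover have "cmod (v x / l) > 0" using Re[OF x] by auto
    ultimately show "\<exists>r>0. v x = of_real r * exp (\<i> * of_real (Arg (v x / l))) * l" by blast
  qed
  moreover have "\<forall>x\<in>{s..t}. v x \<noteq> 0" using Re by fastforce
  ultimately show ?thesis
    using phase_increment_eq_integral[OF wd st _ _ l0] by blast
qed

lemma Arg_divide_tendsto_0:
  assumes "(v \<longlongrightarrow> l) F" "l \<noteq> 0"
  shows "((\<lambda>x. Arg (v x / l)) \<longlongrightarrow> 0) F"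
proof -
  have "((\<lambda>x. v x / l) \<longlongrightarrow> 1) F" using tendsto_divide[OF assms(1) tendsto_const assms(2)] assms(2) by simp
  then show ?thesis using isCont_tendsto_compose[OF continuous_at_Arg, of 1] by simp
qed

section \<open>Momentum of maps in \<open>Z\<^sup>1\<close>\<close>

lemma cinner_i_mult_eq:
  assumes "v \<noteq> 0"
  shows "cinner (\<i> * v) dv = ((cmod v)\<^sup>2 - 1) * Im (dv / v) + Im (dv / v)"
proof -
  have "(cmod v)\<^sup>2 * Im (dv / v) = Im (dv * cnj v)"
    using assms by (simp add: complex_div_cnj[of dv v] Im_divide_of_real)
  then show ?thesis unfolding cinner_def by (simp add: algebra_simps)
qed

lemma set_integrable_defect_mult_Im_divide:
  fixes v dv :: "real \<Rightarrow> complex"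
  assumes X1: "X1 v dv" and m: "m > 0" "\<forall>x\<in>S. m \<le> cmod (v x)" and S: "S \<in> sets borel"
  shows "set_integrable lborel S (\<lambda>x. ((cmod (v x))\<^sup>2 - 1) * Im (dv x / v x))"
proof -
  have dv: "integrable lborel (\<lambda>x. (cmod (dv x))\<^sup>2)" "dv \<in> borel_measurable lborel"
    and v: "integrable lborel (\<lambda>x. (1 - (cmod (v x))\<^sup>2)\<^sup>2)" and wd: "weak_deriv v dv"
    using X1 unfolding X1_def by auto
  have "v \<in> borel_measurable lborel"
    using weak_deriv_imp_continuous[OF wd] by (simp add: borel_measurable_continuous_onI)
  note v = v this
  show ?thesis
  proof (rule set_integrable_bound[where f="\<lambda>x. ((1 - (cmod (v x))\<^sup>2)\<^sup>2 + (cmod (dv x))\<^sup>2) / (2*m)"])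
    show "set_integrable lborel S (\<lambda>x. ((1 - (cmod (v x))\<^sup>2)\<^sup>2 + (cmod (dv x))\<^sup>2) / (2*m))"
      unfolding set_integrable_def using S dv v
      by (intro integrable_mult_indicator integrable_divide_zero Bochner_Integration.integrable_add) auto
    show "set_borel_measurable lborel S (\<lambda>x. ((cmod (v x))\<^sup>2 - 1) * Im (dv x / v x))"
      unfolding set_borel_measurable_def using dv v S by measurable
    show "AE x in lborel. x \<in> S \<longrightarrow> norm (((cmod (v x))\<^sup>2 - 1) * Im (dv x / v x))
        \<le> norm (((1 - (cmod (v x))\<^sup>2)\<^sup>2 + (cmod (dv x))\<^sup>2) / (2*m))"
    proof (intro AE_I2 impI)
      fix x assume "x \<in> S"
      define A where "A = \<bar>1 - (cmod (v x))\<^sup>2\<bar>"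
      define D where "D = cmod (dv x)"
      have "m \<le> cmod (v x)" using m \<open>x \<in> S\<close> by blast
      then have "cmod (dv x) / cmod (v x) \<le> D / m" using m by (auto simp: D_def intro!: divide_left_mono mult_pos_pos)
      then have "\<bar>Im (dv x / v x)\<bar> \<le> D / m" using abs_Im_le_cmod[of "dv x / v x"] by (simp add: norm_divide)
      then have "norm (((cmod (v x))\<^sup>2 - 1) * Im (dv x / v x)) \<le> A * (D / m)"
        unfolding A_def by (simp only: real_norm_def abs_mult abs_minus_commute) (rule mult_left_mono; simp)
      also have "\<dots> \<le> (A\<^sup>2 + D\<^sup>2) / (2*m)"
        using sum_squares_bound[of A D] m by (simp add: field_simps)
      also have "\<dots> = norm (((1 - (cmod (v x))\<^sup>2)\<^sup>2 + (cmod (dv x))\<^sup>2) / (2*m))"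
        using m by (simp add: A_def D_def power2_abs)
      finally show "norm (((cmod (v x))\<^sup>2 - 1) * Im (dv x / v x))
        \<le> norm (((1 - (cmod (v x))\<^sup>2)\<^sup>2 + (cmod (dv x))\<^sup>2) / (2*m))" .
    qed
  qed
qed

lemma X1_tendsto_norm_eq_1:
  assumes "X1 v dv" "(v \<longlongrightarrow> l) F" "F = at_top \<or> F = at_bot"
  shows "cmod l = 1"
proof -
  have int: "integrable lborel (\<lambda>x. (1 - (cmod (v x))\<^sup>2)\<^sup>2)" using assms(1) unfolding X1_def by simp
  have lim: "((\<lambda>x. (1 - (cmod (v x))\<^sup>2)\<^sup>2) \<longlongrightarrow> (1 - (cmod l)\<^sup>2)\<^sup>2) F"
    by (intro tendsto_intros assms(2))
  from assms(3) have "(1 - (cmod l)\<^sup>2)\<^sup>2 = 0"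
  proof
    assume "F = at_top"
    with lim have "((\<lambda>x. (1 - (cmod (v x))\<^sup>2)\<^sup>2) \<longlongrightarrow> (1 - (cmod l)\<^sup>2)\<^sup>2) at_top" by simp
    then show ?thesis by (rule integrable_nonneg_tendsto_at_top_eq_0[OF int, rotated]) simp
  next
    assume "F = at_bot"
    with lim have "((\<lambda>x. (1 - (cmod (v x))\<^sup>2)\<^sup>2) \<longlongrightarrow> (1 - (cmod l)\<^sup>2)\<^sup>2) at_bot" by simp
    then show ?thesis by (rule integrable_nonneg_tendsto_at_bot_eq_0[OF int, rotated]) simp
  qed
  then show ?thesis using power2_eq_1_iff[of "cmod l"] norm_ge_zero[of l] by auto
qed

lemma Z1_tails:
  assumes "Z1 v dv"
  obtains l1 l2 R2 R1 where "cmod l1 = 1" "cmod l2 = 1" "(v \<longlongrightarrow> l1) at_top" "(v \<longlongrightarrow> l2) at_bot"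
    "R2 \<le> R1" "\<forall>x\<in>{R1..}. cmod (v x - l1) < 1/2" "\<forall>x\<in>{..R2}. cmod (v x - l2) < 1/2"
proof -
  obtain l1 l2 where l1: "(v \<longlongrightarrow> l1) at_top" and l2: "(v \<longlongrightarrow> l2) at_bot"
    using assms unfolding Z1_def by blast
  have "eventually (\<lambda>x. dist (v x) l1 < 1/2) at_top" using l1 by (rule tendstoD) simp
  then obtain R1 where R1: "\<forall>x\<ge>R1. cmod (v x - l1) < 1/2"
    by (auto simp: eventually_at_top_linorder dist_norm)
  have "eventually (\<lambda>x. dist (v x) l2 < 1/2) at_bot" using l2 by (rule tendstoD) simp
  then obtain R2 where R2: "\<forall>x\<le>R2. cmod (v x - l2) < 1/2"
    by (auto simp: eventually_at_bot_linorder dist_norm)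
  have "X1 v dv" using assms unfolding Z1_def by simp
  then show ?thesis
    using X1_tendsto_norm_eq_1 l1 l2 R1 R2 by (intro that[of l1 l2 R2 "max R1 R2"]) auto
qed

lemma X1_set_integrable_momentum_density:
  assumes "X1 v dv"
  shows "set_integrable lborel {s..t} (\<lambda>x. cinner (\<i> * v x) (dv x))"
proof (cases "s \<le> t")
  case True
  obtain B where B: "\<And>x. cmod (v x) \<le> B" using assms unfolding X1_def bounded_iff by auto
  have wd: "weak_deriv v dv" and mdv: "dv \<in> borel_measurable lborel" using assms unfolding X1_def by auto
  have "v \<in> borel_measurable lborel"
    using weak_deriv_imp_continuous[OF wd] by (simp add: borel_measurable_continuous_onI)
  moreover have "(\<lambda>x. cnj (dv x)) \<in> borel_measurable lborel"
    by (rule borel_measurable_continuous_on[OF _ mdv]) (intro linear_continuous_on bounded_linear_cnj)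
  ultimately have meas: "(\<lambda>x. cinner (\<i> * v x) (dv x)) \<in> borel_measurable lborel"
    unfolding cinner_def by measurable
  show ?thesis
  proof (rule set_integrable_bound[where f="\<lambda>x. B * cmod (dv x)"])
    show "set_integrable lborel {s..t} (\<lambda>x. B * cmod (dv x))"
      using wd True unfolding weak_deriv_def by (simp add: set_integrable_norm)
    show "set_borel_measurable lborel {s..t} (\<lambda>x. cinner (\<i> * v x) (dv x))"
      unfolding set_borel_measurable_def using meas by measurable
    show "AE x in lborel. x \<in> {s..t} \<longrightarrow> norm (cinner (\<i> * v x) (dv x)) \<le> norm (B * cmod (dv x))"
    proof (intro AE_I2 impI)
      fix x
      have "norm (cinner (\<i> * v x) (dv x)) \<le> cmod (v x) * cmod (dv x)"
        unfolding cinner_def using abs_Re_le_cmod[of "\<i> * v x * cnj (dv x)"] by (simp add: norm_mult)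
      also have "\<dots> \<le> B * cmod (dv x)" using B by (intro mult_right_mono) auto
      finally show "norm (cinner (\<i> * v x) (dv x)) \<le> norm (B * cmod (dv x))" by simp
    qed
  qed
qed (simp add: set_integrable_def)

lemma Z1_momentum_converges:
  assumes "Z1 v dv"
  shows "\<exists>P. ((\<lambda>R. 1/2 * (LINT x:{-R..R}|lborel. cinner (\<i> * v x) (dv x))) \<longlongrightarrow> P) at_top"
proof -
  have X1: "X1 v dv" using assms unfolding Z1_def by simp
  then have wd: "weak_deriv v dv" unfolding X1_def by simp
  obtain l1 l2 R1 R2 where l: "cmod l1 = 1" "cmod l2 = 1" "(v \<longlongrightarrow> l1) at_top" "(v \<longlongrightarrow> l2) at_bot"
    and R: "R2 \<le> R1" and R1: "\<forall>x\<in>{R1..}. cmod (v x - l1) < 1/2" and R2: "\<forall>x\<in>{..R2}. cmod (v x - l2) < 1/2"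
    by (rule Z1_tails[OF assms])
  define w where "w x = ((cmod (v x))\<^sup>2 - 1) * Im (dv x / v x)" for x
  have split: "cinner (\<i> * v x) (dv x) = w x + Im (dv x / v x)" if "cmod (v x - l) < 1/2" "cmod l = 1" for x l
  proof -
    have "v x \<noteq> 0" using norm_ge_half_if_near_unit[OF that(2,1)] by auto
    then show ?thesis by (simp add: cinner_i_mult_eq w_def)
  qed
  have top: "((\<lambda>t. LINT x:{R1..t}|lborel. cinner (\<i> * v x) (dv x))
      \<longlongrightarrow> (LINT x:{R1..}|lborel. w x) + (0 - Arg (v R1 / l1))) at_top"
  proof (rule tendsto_set_integral_at_top_if_decomposition)
    have "\<forall>x\<in>{R1..}. 1/2 \<le> cmod (v x)" using R1 l(1) norm_ge_half_if_near_unit by blast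
    then show "set_integrable lborel {R1..} w"
      unfolding w_def by (intro set_integrable_defect_mult_Im_divide[OF X1, of "1/2"]) auto
    show "((\<lambda>x. Arg (v x / l1)) \<longlongrightarrow> 0) at_top" using l by (intro Arg_divide_tendsto_0) auto
    show "set_integrable lborel {R1..t} (\<lambda>x. Im (dv x / v x))
      \<and> Arg (v t / l1) - Arg (v R1 / l1) = (LINT x:{R1..t}|lborel. Im (dv x / v x))" if "R1 \<le> t" for t
      using R1 that by (intro Arg_increment_eq_integral_near_unit[OF wd l(1)]) auto
  qed (use R1 l(1) split in auto)
  have bot: "((\<lambda>s. LINT x:{s..R2}|lborel. cinner (\<i> * v x) (dv x))
      \<longlongrightarrow> (LINT x:{..R2}|lborel. w x) + (Arg (v R2 / l2) - 0)) at_bot"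
  proof (rule tendsto_set_integral_at_bot_if_decomposition)
    have "\<forall>x\<in>{..R2}. 1/2 \<le> cmod (v x)" using R2 l(2) norm_ge_half_if_near_unit by blast
    then show "set_integrable lborel {..R2} w"
      unfolding w_def by (intro set_integrable_defect_mult_Im_divide[OF X1, of "1/2"]) auto
    show "((\<lambda>x. Arg (v x / l2)) \<longlongrightarrow> 0) at_bot" using l by (intro Arg_divide_tendsto_0) auto
    show "set_integrable lborel {s..R2} (\<lambda>x. Im (dv x / v x))
      \<and> Arg (v R2 / l2) - Arg (v s / l2) = (LINT x:{s..R2}|lborel. Im (dv x / v x))" if "s \<le> R2" for s
      using R2 that by (intro Arg_increment_eq_integral_near_unit[OF wd l(2)]) auto
  qed (use R2 l(2) split in auto)
  show ?thesis
    using tendsto_mult_left[OF tendsto_set_integral_symmetric[OF X1_set_integrable_momentum_density[OF X1] R top bot]]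
    by blast
qed

lemma Z1_tilde_norm_bounded_below:
  assumes "Z1_tilde v dv"
  obtains m where "m > 0" "\<forall>x. m \<le> cmod (v x)"
proof -
  have Z1: "Z1 v dv" and nz: "\<forall>x. v x \<noteq> 0" using assms unfolding Z1_tilde_def by auto
  obtain l1 l2 R1 R2 where l: "cmod l1 = 1" "cmod l2 = 1" "(v \<longlongrightarrow> l1) at_top" "(v \<longlongrightarrow> l2) at_bot"
    and "R2 \<le> R1" and R1: "\<forall>x\<in>{R1..}. cmod (v x - l1) < 1/2" and R2: "\<forall>x\<in>{..R2}. cmod (v x - l2) < 1/2"
    by (rule Z1_tails[OF Z1])
  have "weak_deriv v dv" using Z1 unfolding Z1_def X1_def by simp
  then have "continuous_on {R2..R1} v"
    by (rule continuous_on_subset[OF weak_deriv_imp_continuous]) simp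
  moreover have "\<forall>x\<in>{R2..R1}. v x \<noteq> 0" using nz by blast
  ultimately obtain m where m: "m > 0" "\<forall>x\<in>{R2..R1}. m \<le> cmod (v x)"
    by (rule norm_bounded_below_if_compact_nonvanishing[OF compact_Icc])
  have "min (1/2) m \<le> cmod (v x)" for x
  proof (cases "x \<in> {R2..R1}")
    case False
    then have "cmod (v x - l1) < 1/2 \<and> cmod l1 = 1 \<or> cmod (v x - l2) < 1/2 \<and> cmod l2 = 1"
      using R1 R2 l by auto
    then have "1/2 \<le> cmod (v x)" using norm_ge_half_if_near_unit by blast
    then show ?thesis by simp
  next
    case True
    then show ?thesis using m by (simp add: min.coboundedI2)
  qed
  then show ?thesis using m by (intro that[of "min (1/2) m"]) auto
qed

lemma Z1_tilde_phase_weak_deriv: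
  fixes \<phi> :: "real \<Rightarrow> real"
  assumes "Z1_tilde v dv" "continuous_on UNIV \<phi>"
    and polar: "\<forall>x. v x = complex_of_real (cmod (v x)) * exp (\<i> * complex_of_real (\<phi> x))"
  shows "weak_deriv \<phi> (\<lambda>x. Im (dv x / v x))"
  unfolding weak_deriv_def
proof (intro allI impI)
  fix s t :: real assume st: "s \<le> t"
  have wd: "weak_deriv v dv" and nz: "\<forall>x. v x \<noteq> 0"
    using assms(1) unfolding Z1_tilde_def Z1_def X1_def by auto
  have "\<forall>x\<in>{s..t}. \<exists>r>0. v x = of_real r * exp (\<i> * of_real (\<phi> x)) * 1"
  proof
    fix x
    have "v x = of_real (cmod (v x)) * exp (\<i> * of_real (\<phi> x)) * 1" "cmod (v x) > 0"
      using polar nz by auto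
    then show "\<exists>r>0. v x = of_real r * exp (\<i> * of_real (\<phi> x)) * 1" by blast
  qed
  moreover have "continuous_on {s..t} \<phi>" using assms(2) by (rule continuous_on_subset) simp
  ultimately show "set_integrable lborel {s..t} (\<lambda>x. Im (dv x / v x))
    \<and> \<phi> t - \<phi> s = (LINT x:{s..t}|lborel. Im (dv x / v x))"
    using phase_increment_eq_integral[OF wd st _ _ one_neq_zero] nz by blast
qed

lemma Z1_phase_tendsto:
  fixes \<phi> :: "real \<Rightarrow> real"
  assumes Z1: "Z1 v dv" and \<phi>: "weak_deriv \<phi> (\<lambda>x. Im (dv x / v x))"
  shows "\<exists>a. (\<phi> \<longlongrightarrow> a) at_top" and "\<exists>b. (\<phi> \<longlongrightarrow> b) at_bot"
proof -
  have wd: "weak_deriv v dv" using Z1 unfolding Z1_def X1_def by simp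
  obtain l1 l2 R1 R2 where l: "cmod l1 = 1" "cmod l2 = 1" "(v \<longlongrightarrow> l1) at_top" "(v \<longlongrightarrow> l2) at_bot"
    and "R2 \<le> R1" and R1: "\<forall>x\<in>{R1..}. cmod (v x - l1) < 1/2" and R2: "\<forall>x\<in>{..R2}. cmod (v x - l2) < 1/2"
    by (rule Z1_tails[OF Z1])
  have incr: "\<phi> t - \<phi> s = Arg (v t / l) - Arg (v s / l)"
    if "s \<le> t" "\<forall>x\<in>{s..t}. cmod (v x - l) < 1/2" "cmod l = 1" for s t l
  proof -
    have "\<phi> t - \<phi> s = (LINT x:{s..t}|lborel. Im (dv x / v x))"
      using \<phi> that(1) unfolding weak_deriv_def by blast
    moreover have "Arg (v t / l) - Arg (v s / l) = (LINT x:{s..t}|lborel. Im (dv x / v x))"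
      using Arg_increment_eq_integral_near_unit[OF wd that(3,1,2)] by blast
    ultimately show ?thesis by simp
  qed
  have top: "\<phi> t = (\<phi> R1 - Arg (v R1 / l1)) + Arg (v t / l1)" if "R1 \<le> t" for t
    using incr[of R1 t l1] that R1 l(1) by simp
  have bot: "\<phi> s = (\<phi> R2 - Arg (v R2 / l2)) + Arg (v s / l2)" if "s \<le> R2" for s
    using incr[of s R2 l2] that R2 l(2) by simp
  have "((\<lambda>t. (\<phi> R1 - Arg (v R1 / l1)) + Arg (v t / l1)) \<longlongrightarrow> (\<phi> R1 - Arg (v R1 / l1)) + 0) at_top"
    using l by (intro tendsto_intros Arg_divide_tendsto_0) auto
  moreover have "eventually (\<lambda>t. (\<phi> R1 - Arg (v R1 / l1)) + Arg (v t / l1) = \<phi> t) at_top"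
    unfolding eventually_at_top_linorder by (intro exI[of _ R1] allI impI top[symmetric])
  ultimately have "(\<phi> \<longlongrightarrow> (\<phi> R1 - Arg (v R1 / l1)) + 0) at_top" by (rule Lim_transform_eventually)
  then show "\<exists>a. (\<phi> \<longlongrightarrow> a) at_top" ..
  have "((\<lambda>s. (\<phi> R2 - Arg (v R2 / l2)) + Arg (v s / l2)) \<longlongrightarrow> (\<phi> R2 - Arg (v R2 / l2)) + 0) at_bot"
    using l by (intro tendsto_intros Arg_divide_tendsto_0) auto
  moreover have "eventually (\<lambda>s. (\<phi> R2 - Arg (v R2 / l2)) + Arg (v s / l2) = \<phi> s) at_bot"
    unfolding eventually_at_bot_linorder by (intro exI[of _ R2] allI impI bot[symmetric])
  ultimately have "(\<phi> \<longlongrightarrow> (\<phi> R2 - Arg (v R2 / l2)) + 0) at_bot" by (rule Lim_transform_eventually)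
  then show "\<exists>b. (\<phi> \<longlongrightarrow> b) at_bot" ..
qed

lemma Z1_tilde_momentum_tendsto:
  fixes \<phi> :: "real \<Rightarrow> real"
  assumes Zt: "Z1_tilde v dv" and \<phi>: "weak_deriv \<phi> (\<lambda>x. Im (dv x / v x))"
    and a: "(\<phi> \<longlongrightarrow> a) at_top" and b: "(\<phi> \<longlongrightarrow> b) at_bot"
  shows "integrable lborel (\<lambda>x. ((cmod (v x))\<^sup>2 - 1) * Im (dv x / v x))"
    and "((\<lambda>R. 1/2 * (LINT x:{-R..R}|lborel. cinner (\<i> * v x) (dv x)))
      \<longlongrightarrow> 1/2 * (LINT x|lborel. ((cmod (v x))\<^sup>2 - 1) * Im (dv x / v x)) + 1/2 * (a - b)) at_top"
proof -
  have X1: "X1 v dv" and nz: "\<forall>x. v x \<noteq> 0" using Zt unfolding Z1_tilde_def Z1_def by auto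
  obtain m where m: "m > 0" "\<forall>x. m \<le> cmod (v x)" by (rule Z1_tilde_norm_bounded_below[OF Zt])
  define w where "w x = ((cmod (v x))\<^sup>2 - 1) * Im (dv x / v x)" for x
  have wS: "set_integrable lborel S w" if "S \<in> sets borel" for S
    unfolding w_def using m that by (intro set_integrable_defect_mult_Im_divide[OF X1]) auto
  then show w: "integrable lborel (\<lambda>x. ((cmod (v x))\<^sup>2 - 1) * Im (dv x / v x))"
    using wS[of UNIV] by (simp add: set_integrable_def w_def)
  have split: "cinner (\<i> * v x) (dv x) = w x + Im (dv x / v x)" for x
    using cinner_i_mult_eq[of "v x" "dv x"] nz by (simp add: w_def)
  have incr: "set_integrable lborel {s..t} (\<lambda>x. Im (dv x / v x)) \<and> \<phi> t - \<phi> s = (LINT x:{s..t}|lborel. Im (dv x / v x))"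
    if "s \<le> t" for s t
    using \<phi> that unfolding weak_deriv_def by blast
  have top: "((\<lambda>t. LINT x:{0..t}|lborel. cinner (\<i> * v x) (dv x)) \<longlongrightarrow> (LINT x:{0..}|lborel. w x) + (a - \<phi> 0)) at_top"
    by (rule tendsto_set_integral_at_top_if_decomposition[OF wS a incr split]) auto
  have bot: "((\<lambda>s. LINT x:{s..0}|lborel. cinner (\<i> * v x) (dv x)) \<longlongrightarrow> (LINT x:{..0}|lborel. w x) + (\<phi> 0 - b)) at_bot"
    by (rule tendsto_set_integral_at_bot_if_decomposition[OF wS b incr split]) auto
  have "((\<lambda>R. LINT x:{-R..R}|lborel. cinner (\<i> * v x) (dv x))
      \<longlongrightarrow> (LINT x:{..0}|lborel. w x) + (\<phi> 0 - b) + 0 + ((LINT x:{0..}|lborel. w x) + (a - \<phi> 0))) at_top"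
    using tendsto_set_integral_symmetric[OF X1_set_integrable_momentum_density[OF X1] order.refl top bot]
    by (simp add: set_integral_singleton)
  also have "(LINT x:{..0}|lborel. w x) + (\<phi> 0 - b) + 0 + ((LINT x:{0..}|lborel. w x) + (a - \<phi> 0))
      = (LINT x|lborel. w x) + (a - b)"
    using set_integral_atMost_plus_atLeast[OF w[folded w_def], of 0] by (simp add: w_def)
  finally show "((\<lambda>R. 1/2 * (LINT x:{-R..R}|lborel. cinner (\<i> * v x) (dv x)))
      \<longlongrightarrow> 1/2 * (LINT x|lborel. ((cmod (v x))\<^sup>2 - 1) * Im (dv x / v x)) + 1/2 * (a - b)) at_top"
    unfolding w_def by (auto dest: tendsto_mult_left[of _ _ _ "1/2"] simp: distrib_left)
qed

lemma Z1_tilde_weak_deriv_phase_integral_cong: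
  fixes \<phi> d\<phi> :: "real \<Rightarrow> real"
  assumes Zt: "Z1_tilde v dv" and \<phi>: "weak_deriv \<phi> (\<lambda>x. Im (dv x / v x))" and d\<phi>: "weak_deriv \<phi> d\<phi>"
    and int: "integrable lborel (\<lambda>x. ((cmod (v x))\<^sup>2 - 1) * Im (dv x / v x))"
  shows "integrable lborel (\<lambda>x. ((cmod (v x))\<^sup>2 - 1) * d\<phi> x)"
    and "(LINT x|lborel. ((cmod (v x))\<^sup>2 - 1) * d\<phi> x) = (LINT x|lborel. ((cmod (v x))\<^sup>2 - 1) * Im (dv x / v x))"
proof -
  have "weak_deriv v dv" using Zt unfolding Z1_tilde_def Z1_def X1_def by simp
  then have "v \<in> borel_measurable lborel"
    by (simp add: weak_deriv_imp_continuous borel_measurable_continuous_onI)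
  then have meas: "(\<lambda>x. ((cmod (v x))\<^sup>2 - 1) * d\<phi> x) \<in> borel_measurable lborel"
    using weak_deriv_borel_measurable[OF d\<phi>] by measurable
  have ae: "AE x in lborel. ((cmod (v x))\<^sup>2 - 1) * Im (dv x / v x) = ((cmod (v x))\<^sup>2 - 1) * d\<phi> x"
    using weak_deriv_AE_unique[OF \<phi> d\<phi>] by eventually_elim simp
  show "integrable lborel (\<lambda>x. ((cmod (v x))\<^sup>2 - 1) * d\<phi> x)"
    by (rule integrable_cong_AE_imp[OF int meas ae])
  show "(LINT x|lborel. ((cmod (v x))\<^sup>2 - 1) * d\<phi> x) = (LINT x|lborel. ((cmod (v x))\<^sup>2 - 1) * Im (dv x / v x))"
    by (rule integral_cong_AE[OF meas borel_measurable_integrable[OF int]]) (use ae in \<open>auto elim: AE_mp\<close>)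
qed

theorem lemma1:
  fixes v dv :: "real \<Rightarrow> complex"
  assumes "Z1 v dv"
  shows "\<exists>P. ((\<lambda>R. 1/2 * (LINT x:{-R..R}|lborel. cinner (\<i> * v x) (dv x))) \<longlongrightarrow> P) at_top
           \<and> (Z1_tilde v dv \<longrightarrow>
               (\<forall>\<phi> :: real \<Rightarrow> real. continuous_on UNIV \<phi> \<and>
                   (\<forall>x. v x = complex_of_real (cmod (v x)) * exp (\<i> * complex_of_real (\<phi> x))) \<longrightarrow>
                 (\<exists>a b. (\<phi> \<longlongrightarrow> a) at_top \<and> (\<phi> \<longlongrightarrow> b) at_bot
                   \<and> (\<exists>d\<phi>. weak_deriv \<phi> d\<phi>)
                   \<and> (\<forall>d\<phi>. weak_deriv \<phi> d\<phi> \<longrightarrow>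
                        integrable lborel (\<lambda>x. ((cmod (v x))\<^sup>2 - 1) * d\<phi> x)
                      \<and> P = 1/2 * (LINT x|lborel. ((cmod (v x))\<^sup>2 - 1) * d\<phi> x) + 1/2 * (a - b)))))"
proof -
  obtain P where P: "((\<lambda>R. 1/2 * (LINT x:{-R..R}|lborel. cinner (\<i> * v x) (dv x))) \<longlongrightarrow> P) at_top"
    using Z1_momentum_converges[OF assms] by blast
  show ?thesis
  proof (rule exI[of _ P], intro conjI impI allI P)
    fix \<phi> :: "real \<Rightarrow> real"
    assume Zt: "Z1_tilde v dv"
      and "continuous_on UNIV \<phi> \<and> (\<forall>x. v x = complex_of_real (cmod (v x)) * exp (\<i> * complex_of_real (\<phi> x)))"
    then have \<phi>: "weak_deriv \<phi> (\<lambda>x. Im (dv x / v x))" by (blast intro: Z1_tilde_phase_weak_deriv)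
    obtain a b where a: "(\<phi> \<longlongrightarrow> a) at_top" and b: "(\<phi> \<longlongrightarrow> b) at_bot"
      using Z1_phase_tendsto[OF _ \<phi>] Zt unfolding Z1_tilde_def by blast
    note momentum = Z1_tilde_momentum_tendsto[OF Zt \<phi> a b]
    have P_eq: "P = 1/2 * (LINT x|lborel. ((cmod (v x))\<^sup>2 - 1) * Im (dv x / v x)) + 1/2 * (a - b)"
      using tendsto_unique[OF _ P momentum(2)] by simp
    have "\<forall>d\<phi>. weak_deriv \<phi> d\<phi> \<longrightarrow> integrable lborel (\<lambda>x. ((cmod (v x))\<^sup>2 - 1) * d\<phi> x) \<and>
        P = 1/2 * (LINT x|lborel. ((cmod (v x))\<^sup>2 - 1) * d\<phi> x) + 1/2 * (a - b)"
      using Z1_tilde_weak_deriv_phase_integral_cong[OF Zt \<phi> _ momentum(1)] P_eq by simp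
    then show "\<exists>a b. (\<phi> \<longlongrightarrow> a) at_top \<and> (\<phi> \<longlongrightarrow> b) at_bot \<and> (\<exists>d\<phi>. weak_deriv \<phi> d\<phi>) \<and>
        (\<forall>d\<phi>. weak_deriv \<phi> d\<phi> \<longrightarrow> integrable lborel (\<lambda>x. ((cmod (v x))\<^sup>2 - 1) * d\<phi> x) \<and>
          P = 1/2 * (LINT x|lborel. ((cmod (v x))\<^sup>2 - 1) * d\<phi> x) + 1/2 * (a - b))"
      using a b \<phi> by blast
  qed
qed

end
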